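(* The approximate loss of the pseudo-network is convex with respect to the trainable parameters; consequently, for all $t\in[T]$, for any parameters $\theta^*$ and any training set $\mathcal X$ of points $x$ with $\|x\|_2\le\frac12$, $$\tilde L(\nabla g^{(t)},\mathcal X)-\tilde L(\nabla g^*,\mathcal X)\le\big\langle\nabla_\theta\tilde L(\nabla g^{(t)},\mathcal X),\ \theta^{(t)}-\theta^*\big\rangle,$$ where $g^{(t)}$ and $g^*$ denote the pseudo-network models with parameters $\theta^{(t)}$ and $\theta^*$ respectively.
   Context: UNF pseudo-network setting. For $\|x_{1:i}\|_2\le1$, $\hat x_{1:i}=(x_1,\dots,x_i,\sqrt{1-\|x_{1:i}\|_2^2})$. $\sigma'(u)=\mathbf 1\{u\ge0\}$; $\phi(u)=e^u$ ($u<0$), $u+1$ ($u\ge0$). Fixed initial parameters $a_{i,r}\in\mathbb{R}$, $\bar w_{i,r}\in\mathbb{R}^{i+1}$, $\bar b_{i,r}\in\mathbb{R}$ ($i\in[d],r\in[m]$); parameters $\theta=(\theta_1,\dots,\theta_d)$, $\theta_i=(w_{i,r},b_{i,r})_{r\in[m]}$. Pseudo-network $P(x_{1:i};\theta_i)=\sum_ra_{i,r}\sigma'(\langle\bar w_{i,r},\hat x_{1:i}\rangle+\bar b_{i,r})(\langle\bar w_{i,r}+w_{i,r},\hat x_{1:i}\rangle+\bar b_{i,r}+b_{i,r})$ and $\frac{\partial g_i}{\partial x_i}(x_{1:i})=\phi(P(x_{1:i};\theta_i))$. Quadrature with $Q$ points: $\Delta_{x_i}=(x_i+1)/Q$, $q^{(j)}_i=(x_1,\dots,x_{i-1},-1+j\Delta_{x_i})$.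 Approximate loss $\tilde L(\nabla g,x)=\sum_{i=1}^d\big(\sum_{j=1}^Q\Delta_{x_i}\phi(P(q^{(j)}_i;\theta_i))-\log\phi(P(x_{1:i};\theta_i))\big)$ and $\tilde L(\nabla g,\mathcal X)=\frac1{|\mathcal X|}\sum_{x\in\mathcal X}\tilde L(\nabla g,x)$. $\theta^{(t)}$, $t\in[T]$, is any sequence of parameters (in the paper, SGD iterates). *)

theory Defs
  imports "HOL-Analysis.Analysis"
begin

text \<open>Points x are functions nat => real; only the coordinates x 1, ..., x d matter.
  Parameters: w_{i,r} in R^{i+1} is represented by W i r k (k = 1..i+1),
  b_{i,r} by B i r. The fixed initialisation is a i r, wbar i r k, bbar i r.\<close>

definition xhat :: "(nat \<Rightarrow> real) \<Rightarrow> nat \<Rightarrow> nat \<Rightarrow> real" where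
  "xhat x i k = (if k \<le> i then x k else sqrt (1 - (\<Sum>l=1..i. (x l)^2)))"

definition sigma' :: "real \<Rightarrow> real" where
  "sigma' u = (if u \<ge> 0 then 1 else 0)"

definition phi :: "real \<Rightarrow> real" where
  "phi u = (if u < 0 then exp u else u + 1)"

definition P :: "nat \<Rightarrow> (nat \<Rightarrow> nat \<Rightarrow> real) \<Rightarrow> (nat \<Rightarrow> nat \<Rightarrow> nat \<Rightarrow> real) \<Rightarrow> (nat \<Rightarrow> nat \<Rightarrow> real)
    \<Rightarrow> (nat \<Rightarrow> nat \<Rightarrow> nat \<Rightarrow> real) \<Rightarrow> (nat \<Rightarrow> nat \<Rightarrow> real) \<Rightarrow> nat \<Rightarrow> (nat \<Rightarrow> real) \<Rightarrow> real" where
  "P m a wbar bbar W B i x =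
     (\<Sum>r=1..m. a i r
        * sigma' ((\<Sum>k=1..i+1. wbar i r k * xhat x i k) + bbar i r)
        * ((\<Sum>k=1..i+1. (wbar i r k + W i r k) * xhat x i k) + bbar i r + B i r))"

definition qpt :: "nat \<Rightarrow> (nat \<Rightarrow> real) \<Rightarrow> nat \<Rightarrow> nat \<Rightarrow> nat \<Rightarrow> real" where
  "qpt Q x i j = x(i := -1 + real j * ((x i + 1) / real Q))"

definition Lpt :: "nat \<Rightarrow> nat \<Rightarrow> nat \<Rightarrow> (nat \<Rightarrow> nat \<Rightarrow> real) \<Rightarrow> (nat \<Rightarrow> nat \<Rightarrow> nat \<Rightarrow> real) \<Rightarrow> (nat \<Rightarrow> nat \<Rightarrow> real)
    \<Rightarrow> (nat \<Rightarrow> nat \<Rightarrow> nat \<Rightarrow> real) \<Rightarrow> (nat \<Rightarrow> nat \<Rightarrow> real) \<Rightarrow> (nat \<Rightarrow> real) \<Rightarrow> real" where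
  "Lpt d m Q a wbar bbar W B x =
     (\<Sum>i=1..d. (\<Sum>j=1..Q. ((x i + 1) / real Q) * phi (P m a wbar bbar W B i (qpt Q x i j)))
               - ln (phi (P m a wbar bbar W B i x)))"

definition Lset :: "nat \<Rightarrow> nat \<Rightarrow> nat \<Rightarrow> (nat \<Rightarrow> nat \<Rightarrow> real) \<Rightarrow> (nat \<Rightarrow> nat \<Rightarrow> nat \<Rightarrow> real) \<Rightarrow> (nat \<Rightarrow> nat \<Rightarrow> real)
    \<Rightarrow> (nat \<Rightarrow> nat \<Rightarrow> nat \<Rightarrow> real) \<Rightarrow> (nat \<Rightarrow> nat \<Rightarrow> real) \<Rightarrow> (nat \<Rightarrow> real) set \<Rightarrow> real" where
  "Lset d m Q a wbar bbar W B X = (1 / real (card X)) * (\<Sum>x\<in>X. Lpt d m Q a wbar bbar W B x)"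

definition dW :: "((nat \<Rightarrow> nat \<Rightarrow> nat \<Rightarrow> real) \<Rightarrow> (nat \<Rightarrow> nat \<Rightarrow> real) \<Rightarrow> real)
    \<Rightarrow> (nat \<Rightarrow> nat \<Rightarrow> nat \<Rightarrow> real) \<Rightarrow> (nat \<Rightarrow> nat \<Rightarrow> real) \<Rightarrow> nat \<Rightarrow> nat \<Rightarrow> nat \<Rightarrow> real" where
  "dW L W B i r k = deriv (\<lambda>s. L (W(i := (W i)(r := (W i r)(k := s))))  B) (W i r k)"

definition dB :: "((nat \<Rightarrow> nat \<Rightarrow> nat \<Rightarrow> real) \<Rightarrow> (nat \<Rightarrow> nat \<Rightarrow> real) \<Rightarrow> real)
    \<Rightarrow> (nat \<Rightarrow> nat \<Rightarrow> nat \<Rightarrow> real) \<Rightarrow> (nat \<Rightarrow> nat \<Rightarrow> real) \<Rightarrow> nat \<Rightarrow> nat \<Rightarrow> real" where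
  "dB L W B i r = deriv (\<lambda>s. L W (B(i := (B i)(r := s)))) (B i r)"

definition grad_inner :: "nat \<Rightarrow> nat \<Rightarrow> ((nat \<Rightarrow> nat \<Rightarrow> nat \<Rightarrow> real) \<Rightarrow> (nat \<Rightarrow> nat \<Rightarrow> real) \<Rightarrow> real)
    \<Rightarrow> (nat \<Rightarrow> nat \<Rightarrow> nat \<Rightarrow> real) \<Rightarrow> (nat \<Rightarrow> nat \<Rightarrow> real)
    \<Rightarrow> (nat \<Rightarrow> nat \<Rightarrow> nat \<Rightarrow> real) \<Rightarrow> (nat \<Rightarrow> nat \<Rightarrow> real) \<Rightarrow> real" where
  "grad_inner d m L W B W' B' =
     (\<Sum>i=1..d. \<Sum>r=1..m.
        (\<Sum>k=1..i+1. dW L W B i r k * (W i r k - W' i r k)) + dB L W B i r * (B i r - B' i r))"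

end

theory Submission
  imports Defs
begin

text \<open>For each unit \<open>i\<close> the pseudo-network output \<open>P(x_1..x_i; \<theta>_i)\<close> is affine in the
  trainable parameters, and both \<open>\<phi>\<close> and \<open>-log \<phi>\<close> are convex and continuously differentiable
  (\<open>-log \<phi>\<close> equals \<open>-u\<close> for \<open>u < 0\<close> and \<open>-log (u + 1)\<close> for \<open>u \<ge> 0\<close>). When \<open>\<parallel>x\<parallel> \<le> 1/2\<close>
  the quadrature weights \<open>(x_i + 1)/Q\<close> are non-negative, so the approximate loss is a
  non-negative combination of convex differentiable functions of affine maps. Every such term
  satisfies the first-order inequality \<open>L \<theta> - L \<theta>' \<le> \<langle>\<nabla>L \<theta>, \<theta> - \<theta>'\<rangle>\<close> (its graph lies above
  its tangents), and the inequality survives sums and non-negative scalings because partial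
  derivatives are linear. Convexity in turn follows from the first-order inequality: the
  right-hand side is affine in \<open>\<theta>'\<close>, so the tangent bounds at a convex combination of two
  points average to zero.\<close>

type_synonym weights = "nat \<Rightarrow> nat \<Rightarrow> nat \<Rightarrow> real"
type_synonym biases = "nat \<Rightarrow> nat \<Rightarrow> real"

definition phi' :: "real \<Rightarrow> real" where
  "phi' u = (if u < 0 then exp u else 1)"

lemma phi_pos: "0 < phi u"
  by (simp add: phi_def)

lemma phi_has_derivative: "(phi has_real_derivative phi' u) (at u)"
proof -
  have "((\<lambda>x. if x \<in> {..<0} then exp x else x + 1) has_vector_derivative
      (if u \<in> {..<0} then exp u else 1)) (at u within UNIV)"
    by (rule has_vector_derivative_If_within_closures[where T = "{0..}"])
      (auto simp flip: has_real_derivative_iff_has_vector_derivative intro!: derivative_eq_intros)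
  then show ?thesis
    unfolding has_real_derivative_iff_has_vector_derivative phi_def[abs_def] phi'_def
    by (simp add: if_distrib[of "\<lambda>D. (_ has_vector_derivative D) _"])
qed

lemma convex_on_phi: "convex_on UNIV phi"
  by (rule convex_on_realI[OF _ phi_has_derivative]) (auto simp: phi'_def)

lemma phi'_div_phi: "phi' u / phi u = (if u < 0 then 1 else 1 / (u + 1))"
  by (simp add: phi_def phi'_def)

lemma neg_ln_phi_has_derivative:
  "((\<lambda>u. - ln (phi u)) has_real_derivative - (phi' u / phi u)) (at u)"
  by (auto intro!: derivative_eq_intros phi_has_derivative phi_pos simp: field_simps)

lemma convex_on_neg_ln_phi: "convex_on UNIV (\<lambda>u. - ln (phi u))"
  by (rule convex_on_realI[OF _ neg_ln_phi_has_derivative]) (auto simp: phi'_div_phi field_simps)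

definition param_inner :: "nat \<Rightarrow> nat \<Rightarrow> weights \<Rightarrow> biases \<Rightarrow> weights \<Rightarrow> biases \<Rightarrow> real" where
  "param_inner d m F H U V = (\<Sum>i=1..d. \<Sum>r=1..m. (\<Sum>k=1..i+1. F i r k * U i r k) + H i r * V i r)"

lemma grad_inner_eq_param_inner:
  "grad_inner d m L W B W' B' =
     param_inner d m (dW L W B) (dB L W B) (\<lambda>i r k. W i r k - W' i r k) (\<lambda>i r. B i r - B' i r)"
  by (simp add: grad_inner_def param_inner_def)

lemma param_inner_add_left:
  "param_inner d m (\<lambda>i r k. F1 i r k + F2 i r k) (\<lambda>i r. H1 i r + H2 i r) U V
     = param_inner d m F1 H1 U V + param_inner d m F2 H2 U V"
  by (simp add: param_inner_def sum.distrib algebra_simps)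

lemma param_inner_scale_left:
  "param_inner d m (\<lambda>i r k. c * F i r k) (\<lambda>i r. c * H i r) U V = c * param_inner d m F H U V"
  by (simp add: param_inner_def sum_distrib_left algebra_simps)

lemma param_inner_restrict_left:
  "param_inner d m (\<lambda>i r k. if i \<in> {1..d} \<and> r \<in> {1..m} \<and> k \<in> {1..i+1} then F i r k else 0)
                   (\<lambda>i r. if i \<in> {1..d} \<and> r \<in> {1..m} then H i r else 0) U V
   = param_inner d m F H U V"
  unfolding param_inner_def by (intro sum.cong refl) auto

lemma param_inner_diff_right:
  "param_inner d m F H (\<lambda>i r k. U i r k - U' i r k) (\<lambda>i r. V i r - V' i r)
     = param_inner d m F H U V - param_inner d m F H U' V'"
  by (simp add: param_inner_def algebra_simps sum_subtractf sum.distrib)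

lemma param_inner_update_W:
  "param_inner d m F H (W(i := (W i)(r := (W i r)(k := s)))) B
     = param_inner d m F H W B
       + (if i \<in> {1..d} \<and> r \<in> {1..m} \<and> k \<in> {1..i+1} then F i r k else 0) * (s - W i r k)"
proof -
  let ?W' = "W(i := (W i)(r := (W i r)(k := s)))"
  have "param_inner d m F H ?W' B - param_inner d m F H W B
     = (\<Sum>i'=1..d. \<Sum>r'=1..m. \<Sum>k'=1..i'+1. F i' r' k' * (?W' i' r' k' - W i' r' k'))"
    by (simp only: param_inner_def sum_subtractf[symmetric] right_diff_distrib[symmetric]
        add_diff_add diff_self add_0_right)
  also have "\<dots> = (\<Sum>i'=1..d. if i' = i then \<Sum>r'=1..m. if r' = r then
                     \<Sum>k'=1..i'+1. if k' = k then F i r k * (s - W i r k) else 0 else 0 else 0)"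
    by (intro sum.cong refl) (auto intro!: sum.cong sum.neutral simp del: sum.delta)
  also have "\<dots> = (if i \<in> {1..d} \<and> r \<in> {1..m} \<and> k \<in> {1..i+1} then F i r k else 0) * (s - W i r k)"
    by simp
  finally show ?thesis
    by (simp add: algebra_simps)
qed

lemma param_inner_update_B:
  "param_inner d m F H W (B(i := (B i)(r := s)))
     = param_inner d m F H W B + (if i \<in> {1..d} \<and> r \<in> {1..m} then H i r else 0) * (s - B i r)"
proof -
  let ?B' = "B(i := (B i)(r := s))"
  have "param_inner d m F H W ?B' - param_inner d m F H W B
     = (\<Sum>i'=1..d. \<Sum>r'=1..m. H i' r' * (?B' i' r' - B i' r'))"
    by (simp only: param_inner_def sum_subtractf[symmetric] right_diff_distrib[symmetric]
        add_diff_add diff_self add_0_left)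
  also have "\<dots> = (\<Sum>i'=1..d. if i' = i then \<Sum>r'=1..m. if r' = r then H i r * (s - B i r) else 0 else 0)"
    by (intro sum.cong refl) (auto intro!: sum.cong sum.neutral simp del: sum.delta)
  also have "\<dots> = (if i \<in> {1..d} \<and> r \<in> {1..m} then H i r else 0) * (s - B i r)"
    by simp
  finally show ?thesis
    by (simp add: algebra_simps)
qed

definition coordinatewise_differentiable :: "(weights \<Rightarrow> biases \<Rightarrow> real) \<Rightarrow> bool" where
  "coordinatewise_differentiable L \<longleftrightarrow>
     (\<forall>W B i r k. (\<lambda>s. L (W(i := (W i)(r := (W i r)(k := s)))) B) field_differentiable at (W i r k)) \<and>
     (\<forall>W B i r. (\<lambda>s. L W (B(i := (B i)(r := s)))) field_differentiable at (B i r))"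

text \<open>Differentiability is part of the notion because \<^const>\<open>dW\<close> and \<^const>\<open>dB\<close> are defined
  with \<^const>\<open>deriv\<close>, which is linear only on differentiable functions.\<close>

definition first_order_convex :: "nat \<Rightarrow> nat \<Rightarrow> (weights \<Rightarrow> biases \<Rightarrow> real) \<Rightarrow> bool" where
  "first_order_convex d m L \<longleftrightarrow> coordinatewise_differentiable L \<and>
     (\<forall>W B W' B'. L W B - L W' B' \<le> grad_inner d m L W B W' B')"

lemma first_order_convex_imp_convex:
  assumes L: "first_order_convex d m L" and l: "0 \<le> l" "l \<le> 1"
  shows "L (\<lambda>i r k. l * W1 i r k + (1 - l) * W2 i r k) (\<lambda>i r. l * B1 i r + (1 - l) * B2 i r)
           \<le> l * L W1 B1 + (1 - l) * L W2 B2"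
proof -
  define W where "W = (\<lambda>i r k. l * W1 i r k + (1 - l) * W2 i r k)"
  define B where "B = (\<lambda>i r. l * B1 i r + (1 - l) * B2 i r)"
  let ?g = "grad_inner d m L W B"
  have "l * (L W B - L W1 B1) \<le> l * ?g W1 B1" "(1 - l) * (L W B - L W2 B2) \<le> (1 - l) * ?g W2 B2"
    using L l by (auto simp: first_order_convex_def intro!: mult_left_mono)
  moreover have "l * ?g W1 B1 + (1 - l) * ?g W2 B2 = 0"
    by (simp add: grad_inner_def W_def B_def sum_distrib_left sum.distrib[symmetric] algebra_simps)
  ultimately show ?thesis
    unfolding W_def B_def by (simp add: algebra_simps)
qed

lemma first_order_convex_zero: "first_order_convex d m (\<lambda>W B. 0)"
  by (simp add: first_order_convex_def coordinatewise_differentiable_def grad_inner_def dW_def dB_def)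

lemma first_order_convex_add:
  assumes L1: "first_order_convex d m L1" and L2: "first_order_convex d m L2"
  shows "first_order_convex d m (\<lambda>W B. L1 W B + L2 W B)"
proof -
  have diff: "coordinatewise_differentiable L1" "coordinatewise_differentiable L2"
    using L1 L2 by (simp_all add: first_order_convex_def)
  then have "dW (\<lambda>W B. L1 W B + L2 W B) W B = (\<lambda>i r k. dW L1 W B i r k + dW L2 W B i r k)"
    and "dB (\<lambda>W B. L1 W B + L2 W B) W B = (\<lambda>i r. dB L1 W B i r + dB L2 W B i r)" for W B
    by (simp_all add: coordinatewise_differentiable_def dW_def dB_def fun_eq_iff)
  then have grad: "grad_inner d m (\<lambda>W B. L1 W B + L2 W B) W B W' B'
      = grad_inner d m L1 W B W' B' + grad_inner d m L2 W B W' B'" for W B W' B'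
    by (simp add: grad_inner_eq_param_inner param_inner_add_left)
  have "L1 W B + L2 W B - (L1 W' B' + L2 W' B')
      \<le> grad_inner d m (\<lambda>W B. L1 W B + L2 W B) W B W' B'" for W B W' B'
  proof -
    have "L1 W B - L1 W' B' \<le> grad_inner d m L1 W B W' B'"
      and "L2 W B - L2 W' B' \<le> grad_inner d m L2 W B W' B'"
      using L1 L2 by (simp_all add: first_order_convex_def)
    then show ?thesis
      unfolding grad by linarith
  qed
  moreover have "coordinatewise_differentiable (\<lambda>W B. L1 W B + L2 W B)"
    using diff by (simp add: coordinatewise_differentiable_def field_differentiable_add)
  ultimately show ?thesis
    by (simp add: first_order_convex_def)
qed

lemma first_order_convex_sum:
  assumes "finite N" "\<And>n. n \<in> N \<Longrightarrow> first_order_convex d m (L n)"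
  shows "first_order_convex d m (\<lambda>W B. \<Sum>n\<in>N. L n W B)"
  using assms by (induction N rule: finite_induct) (simp_all add: first_order_convex_zero first_order_convex_add)

lemma first_order_convex_scale:
  assumes L: "first_order_convex d m L" and c: "0 \<le> c"
  shows "first_order_convex d m (\<lambda>W B. c * L W B)"
proof -
  have diff: "coordinatewise_differentiable L"
    using L by (simp add: first_order_convex_def)
  then have "dW (\<lambda>W B. c * L W B) W B = (\<lambda>i r k. c * dW L W B i r k)"
    and "dB (\<lambda>W B. c * L W B) W B = (\<lambda>i r. c * dB L W B i r)" for W B
    by (simp_all add: coordinatewise_differentiable_def dW_def dB_def fun_eq_iff deriv_cmult)
  then have grad: "grad_inner d m (\<lambda>W B. c * L W B) W B W' B' = c * grad_inner d m L W B W' B'"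
    for W B W' B'
    by (simp add: grad_inner_eq_param_inner param_inner_scale_left)
  have "c * L W B - c * L W' B' \<le> grad_inner d m (\<lambda>W B. c * L W B) W B W' B'" for W B W' B'
    using L c unfolding grad first_order_convex_def right_diff_distrib[symmetric]
    by (blast intro: mult_left_mono)
  moreover have "coordinatewise_differentiable (\<lambda>W B. c * L W B)"
    using diff by (simp add: coordinatewise_differentiable_def field_differentiable_mult)
  ultimately show ?thesis
    by (simp add: first_order_convex_def)
qed

lemma first_order_convex_comp_affine:
  fixes \<psi> :: "real \<Rightarrow> real"
  assumes convex: "convex_on UNIV \<psi>" and deriv: "\<And>u. (\<psi> has_real_derivative \<psi>' u) (at u)"
  shows "first_order_convex d m (\<lambda>W B. \<psi> (c + param_inner d m F H W B))"
proof -
  let ?p = "\<lambda>W B. c + param_inner d m F H W B"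
  let ?F = "\<lambda>i r k. if i \<in> {1..d} \<and> r \<in> {1..m} \<and> k \<in> {1..i+1} then F i r k else 0"
  let ?H = "\<lambda>i r. if i \<in> {1..d} \<and> r \<in> {1..m} then H i r else 0"
  have line: "((\<lambda>s. \<psi> (q + K * (s - s0))) has_real_derivative \<psi>' q * K) (at s0)" for q K s0
  proof -
    have "((\<lambda>s. q + K * (s - s0)) has_real_derivative K) (at s0)"
      by (auto intro!: derivative_eq_intros)
    from DERIV_chain2[OF deriv this] show ?thesis
      by simp
  qed
  have dW: "((\<lambda>s. \<psi> (?p (W(i := (W i)(r := (W i r)(k := s)))) B))
      has_real_derivative \<psi>' (?p W B) * ?F i r k) (at (W i r k))" for W B i r k
    unfolding param_inner_update_W add.assoc[symmetric] by (rule line)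
  have dB: "((\<lambda>s. \<psi> (?p W (B(i := (B i)(r := s)))))
      has_real_derivative \<psi>' (?p W B) * ?H i r) (at (B i r))" for W B i r
    unfolding param_inner_update_B add.assoc[symmetric] by (rule line)
  have "grad_inner d m (\<lambda>W B. \<psi> (?p W B)) W B W' B'
      = param_inner d m (\<lambda>i r k. \<psi>' (?p W B) * ?F i r k) (\<lambda>i r. \<psi>' (?p W B) * ?H i r)
          (\<lambda>i r k. W i r k - W' i r k) (\<lambda>i r. B i r - B' i r)" for W B W' B'
    unfolding grad_inner_eq_param_inner dW_def dB_def
    by (simp only: DERIV_imp_deriv[OF dW] DERIV_imp_deriv[OF dB])
  also have "\<dots> W B W' B' = \<psi>' (?p W B) * (?p W B - ?p W' B')" for W B W' B'
    unfolding param_inner_scale_left param_inner_restrict_left param_inner_diff_right by simp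
  finally have grad: "grad_inner d m (\<lambda>W B. \<psi> (?p W B)) W B W' B' = \<psi>' (?p W B) * (?p W B - ?p W' B')"
    for W B W' B' .
  have tangent: "\<psi>' u * (v - u) \<le> \<psi> v - \<psi> u" for u v
    using convex_on_imp_above_tangent[OF convex connected_UNIV _ _ deriv] by simp
  have "\<psi> (?p W B) - \<psi> (?p W' B') \<le> grad_inner d m (\<lambda>W B. \<psi> (?p W B)) W B W' B'" for W B W' B'
    using tangent[of "?p W B" "?p W' B'"] unfolding grad by (simp add: algebra_simps)
  moreover have "coordinatewise_differentiable (\<lambda>W B. \<psi> (?p W B))"
    unfolding coordinatewise_differentiable_def field_differentiable_def using dW dB by blast
  ultimately show ?thesis
    by (simp add: first_order_convex_def)
qed

lemma P_affine_in_params: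
  assumes "i \<in> {1..d}"
  shows "\<exists>c F H. \<forall>W B. P m a wbar bbar W B i y = c + param_inner d m F H W B"
proof -
  define gate where "gate r = a i r * sigma' ((\<Sum>k=1..i+1. wbar i r k * xhat y i k) + bbar i r)" for r
  let ?c = "\<Sum>r=1..m. gate r * ((\<Sum>k=1..i+1. wbar i r k * xhat y i k) + bbar i r)"
  let ?F = "\<lambda>i' r k. if i' = i then gate r * xhat y i k else 0"
  let ?H = "\<lambda>i' r. if i' = i then gate r else 0"
  have "P m a wbar bbar W B i y = ?c + param_inner d m ?F ?H W B" for W B
  proof -
    have split: "(\<Sum>k=1..i+1. (wbar i r k + W i r k) * xhat y i k)
        = (\<Sum>k=1..i+1. wbar i r k * xhat y i k) + (\<Sum>k=1..i+1. W i r k * xhat y i k)" for r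
      by (simp add: distrib_right sum.distrib)
    have "param_inner d m ?F ?H W B
        = (\<Sum>i'=1..d. if i' = i then \<Sum>r=1..m. gate r * ((\<Sum>k=1..i+1. W i r k * xhat y i k) + B i r)
                      else 0)"
      unfolding param_inner_def by (intro sum.cong refl) (auto simp: sum_distrib_left algebra_simps)
    then have inner: "param_inner d m ?F ?H W B
        = (\<Sum>r=1..m. gate r * ((\<Sum>k=1..i+1. W i r k * xhat y i k) + B i r))"
      using assms by simp
    have "P m a wbar bbar W B i y
        = (\<Sum>r=1..m. gate r * ((\<Sum>k=1..i+1. (wbar i r k + W i r k) * xhat y i k) + bbar i r + B i r))"
      by (simp add: P_def gate_def)
    also have "\<dots> = (\<Sum>r=1..m. gate r * ((\<Sum>k=1..i+1. wbar i r k * xhat y i k) + bbar i r)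
                        + gate r * ((\<Sum>k=1..i+1. W i r k * xhat y i k) + B i r))"
      unfolding split by (simp only: distrib_left add_ac)
    finally show ?thesis
      unfolding inner sum.distrib .
  qed
  then show ?thesis
    by blast
qed

lemma first_order_convex_comp_P:
  fixes \<psi> :: "real \<Rightarrow> real"
  assumes "convex_on UNIV \<psi>" "\<And>u. (\<psi> has_real_derivative \<psi>' u) (at u)" "i \<in> {1..d}"
  shows "first_order_convex d m (\<lambda>W B. \<psi> (P m a wbar bbar W B i y))"
proof -
  obtain c F H where "\<forall>W B. P m a wbar bbar W B i y = c + param_inner d m F H W B"
    using P_affine_in_params[OF assms(3)] by blast
  then show ?thesis
    using first_order_convex_comp_affine[OF assms(1,2)] by simp
qed

lemma first_order_convex_Lpt:
  assumes "\<forall>i\<in>{1..d}. 0 \<le> x i + 1"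
  shows "first_order_convex d m (\<lambda>W B. Lpt d m Q a wbar bbar W B x)"
proof -
  have phi_term: "first_order_convex d m (\<lambda>W B. (x i + 1) / real Q * phi (P m a wbar bbar W B i y))"
    if "i \<in> {1..d}" for i y
    using that assms
    by (intro first_order_convex_scale first_order_convex_comp_P[OF convex_on_phi phi_has_derivative]) auto
  have ln_term: "first_order_convex d m (\<lambda>W B. - ln (phi (P m a wbar bbar W B i y)))"
    if "i \<in> {1..d}" for i y
    using that by (rule first_order_convex_comp_P[OF convex_on_neg_ln_phi neg_ln_phi_has_derivative])
  have Lpt_eq: "(\<lambda>W B. Lpt d m Q a wbar bbar W B x)
      = (\<lambda>W B. \<Sum>i=1..d. (\<Sum>j=1..Q. (x i + 1) / real Q * phi (P m a wbar bbar W B i (qpt Q x i j)))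
                         + - ln (phi (P m a wbar bbar W B i x)))"
    unfolding Lpt_def by simp
  show ?thesis
    unfolding Lpt_eq
    by (intro first_order_convex_sum[OF finite_atLeastAtMost] first_order_convex_add phi_term ln_term)
qed

theorem lemma17:
  fixes d m Q T :: nat
    and a :: "nat \<Rightarrow> nat \<Rightarrow> real" and wbar :: "nat \<Rightarrow> nat \<Rightarrow> nat \<Rightarrow> real" and bbar :: "nat \<Rightarrow> nat \<Rightarrow> real"
    and Wt :: "nat \<Rightarrow> nat \<Rightarrow> nat \<Rightarrow> nat \<Rightarrow> real" and Bt :: "nat \<Rightarrow> nat \<Rightarrow> nat \<Rightarrow> real"
    and Ws :: "nat \<Rightarrow> nat \<Rightarrow> nat \<Rightarrow> real" and Bs :: "nat \<Rightarrow> nat \<Rightarrow> real"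
    and X :: "(nat \<Rightarrow> real) set"
  assumes "finite X"
    and "\<forall>x\<in>X. sqrt (\<Sum>k=1..d. (x k)^2) \<le> 1/2"
  shows "(\<forall>W1 B1 W2 B2 (l::real). 0 \<le> l \<and> l \<le> 1 \<longrightarrow>
            Lset d m Q a wbar bbar (\<lambda>i r k. l * W1 i r k + (1 - l) * W2 i r k)
                                   (\<lambda>i r. l * B1 i r + (1 - l) * B2 i r) X
            \<le> l * Lset d m Q a wbar bbar W1 B1 X + (1 - l) * Lset d m Q a wbar bbar W2 B2 X)
       \<and> (\<forall>t\<in>{1..T}.
            Lset d m Q a wbar bbar (Wt t) (Bt t) X - Lset d m Q a wbar bbar Ws Bs X
            \<le> grad_inner d m (\<lambda>W B. Lset d m Q a wbar bbar W B X) (Wt t) (Bt t) Ws Bs)"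
proof -
  have "\<forall>x\<in>X. \<forall>i\<in>{1..d}. 0 \<le> x i + 1"
  proof (intro ballI)
    fix x i
    assume "x \<in> X" "i \<in> {1..d}"
    then have "- x i \<le> L2_set (\<lambda>k. - x k) {1..d}"
      by (intro member_le_L2_set) auto
    also have "\<dots> \<le> 1 / 2"
      using assms(2) \<open>x \<in> X\<close> by (simp add: L2_set_def)
    finally show "0 \<le> x i + 1"
      by simp
  qed
  then have L: "first_order_convex d m (\<lambda>W B. Lset d m Q a wbar bbar W B X)"
    unfolding Lset_def using assms(1)
    by (intro first_order_convex_scale first_order_convex_sum first_order_convex_Lpt) auto
  show ?thesis
    using first_order_convex_imp_convex[OF L] L unfolding first_order_convex_def by blast
qed

end
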